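(* Let $s\ge 1$, $L\ge 1$ and widths $d_0=s,d_1,\dots,d_{L+1}\ge 1$. Let $W_\ell\in\mathbb{R}^{d_{\ell+1}\times d_\ell}$ and $\mathbf{v}_\ell\in\mathbb{R}^{d_{\ell+1}}$ for $\ell=0,\dots,L$, and let $\sigma:\mathbb{R}\to\mathbb{R}$ be smooth (applied componentwise to vectors). Suppose there are positive sequences $(\beta_j)_{j\ge1}$, $(R_\ell)_{\ell\ge1}$, $(A_n)_{n\ge1}$ such that $\max_{1\le p\le d_1}|W_{0,p,j}|\le\beta_j$ for all $j=1,\dots,s$; $\|W_\ell\|_\infty:=\max_{1\le p\le d_{\ell+1}}\sum_{q=1}^{d_\ell}|W_{\ell,p,q}|\le R_\ell$ for all $\ell\ge1$; and $\sup_{x\in\mathbb{R}}|\sigma^{(n)}(x)|\le A_n$ for all $n\ge1$. Define numbers $\Gamma^{[\ell]}_n$ and $\mathbb{B}^{[\ell]}_{n,\lambda}$ recursively by $\Gamma^{[1]}_n:=A_n$ for $n\ge1$; $\Gamma^{[\ell]}_n:=\sum_{\lambda=1}^n A_\lambda R_{\ell-1}^\lambda\,\mathbb{B}^{[\ell-1]}_{n,\lambda}$ for $\ell\ge2$, $n\ge1$; $\mathbb{B}^{[\ell]}_{n,1}:=\Gamma^{[\ell]}_n$ for $n\ge1$; and $\mathbb{B}^{[\ell]}_{n,\lambda}:=\sum_{i=\lambda-1}^{n-1}\binom{n-1}{i}\Gamma^{[\ell]}_{n-i}\,\mathbb{B}^{[\ell]}_{i,\lambda-1}$ for $\ell\ge1$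 and $n\ge\lambda\ge2$. Then for every depth $\ell$ with $1\le \ell\le L$, every component $1\le p\le d_{\ell+1}$, every multiindex $\boldsymbol{\nu}\in\mathbb{N}_0^s$ with $\boldsymbol{\nu}\neq\mathbf{0}$, and every $\mathbf{y}$: (a) the non-periodic network defined by $G^{[0]}_\theta(\mathbf{y}):=W_0\mathbf{y}+\mathbf{v}_0$, $G^{[\ell]}_\theta(\mathbf{y}):=W_\ell\,\sigma(G^{[\ell-1]}_\theta(\mathbf{y}))+\mathbf{v}_\ell$ ($\ell\ge1$) satisfies $$|\partial^{\boldsymbol{\nu}}G^{[\ell]}_\theta(\mathbf{y})_p|\le R_\ell\,\boldsymbol{\beta}^{\boldsymbol{\nu}}\,\Gamma^{[\ell]}_{|\boldsymbol{\nu}|};$$ (b) the periodic network defined by $G^{[0]}_\theta(\mathbf{y}):=W_0\sin(2\pi\mathbf{y})+\mathbf{v}_0$ (sine applied componentwise), $G^{[\ell]}_\theta(\mathbf{y}):=W_\ell\,\sigma(G^{[\ell-1]}_\theta(\mathbf{y}))+\mathbf{v}_\ell$ ($\ell\ge1$) satisfies $$|\partial^{\boldsymbol{\nu}}G^{[\ell]}_\theta(\mathbf{y})_p|\le R_\ell\,(2\pi)^{|\boldsymbol{\nu}|}\sum_{\mathbf{m}\le\boldsymbol{\nu}}\boldsymbol{\beta}^{\mathbf{m}}\,\Gamma^{[\ell]}_{|\mathbf{m}|}\,\mathcal{S}(\boldsymbol{\nu},\mathbf{m}),$$ where the term $\mathbf{m}=\mathbf{0}$ vanishes because $\mathcal{S}(\boldsymbol{\nu},\mathbf{0})=0$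 for $\boldsymbol{\nu}\ne\mathbf{0}$.
   Context: For $\boldsymbol{\nu}=(\nu_1,\dots,\nu_s)\in\mathbb{N}_0^s$: $|\boldsymbol{\nu}|=\sum_j\nu_j$, $\partial^{\boldsymbol{\nu}}=\prod_j(\partial/\partial y_j)^{\nu_j}$, $\boldsymbol{\beta}^{\boldsymbol{\nu}}=\prod_j\beta_j^{\nu_j}$, and $\mathbf{m}\le\boldsymbol{\nu}$ means $m_j\le\nu_j$ for all $j$. $\mathcal{S}(n,k)$ denotes the Stirling number of the second kind: $\mathcal{S}(n,0)=\delta_{n,0}$, $\mathcal{S}(n,k)=0$ for $k>n$, and $\mathcal{S}(n,k)=\frac1{k!}\sum_{i=0}^k(-1)^{k-i}\binom{k}{i}i^n$ for $n\ge k$; $\mathcal{S}(\boldsymbol{\nu},\mathbf{m}):=\prod_j\mathcal{S}(\nu_j,m_j)$. $G^{[\ell]}_\theta(\mathbf{y})_p$ denotes the $p$-th component. *)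

theory Defs
  imports "HOL-Analysis.Analysis" "HOL-Combinatorics.Stirling"
begin

text \<open>Vectors in R^s are functions nat => real (components 0..s-1 used).
  Weight matrices: W l p q = entry (p,q) of W_l (0-based rows/columns);
  biases: v l p. Widths: d l (with d 0 = s).\<close>

definition dpart :: "nat \<Rightarrow> ((nat \<Rightarrow> real) \<Rightarrow> real) \<Rightarrow> ((nat \<Rightarrow> real) \<Rightarrow> real)" where
  "dpart j f = (\<lambda>y. deriv (\<lambda>t. f (y(j := t))) (y j))"

definition mpartial :: "nat \<Rightarrow> (nat \<Rightarrow> nat) \<Rightarrow> ((nat \<Rightarrow> real) \<Rightarrow> real) \<Rightarrow> ((nat \<Rightarrow> real) \<Rightarrow> real)" where
  "mpartial s nu f = foldr (\<lambda>j g. (dpart j ^^ nu j) g) [0..<s] f"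

primrec net :: "(nat \<Rightarrow> nat) \<Rightarrow> (nat \<Rightarrow> nat \<Rightarrow> nat \<Rightarrow> real) \<Rightarrow> (nat \<Rightarrow> nat \<Rightarrow> real)
    \<Rightarrow> (real \<Rightarrow> real) \<Rightarrow> (nat \<Rightarrow> real) \<Rightarrow> nat \<Rightarrow> (nat \<Rightarrow> real)" where
  "net d W v \<sigma> x 0 = (\<lambda>p. (\<Sum>j<d 0. W 0 p j * x j) + v 0 p)"
| "net d W v \<sigma> x (Suc l) =
     (\<lambda>p. (\<Sum>q<d (Suc l). W (Suc l) p q * \<sigma> (net d W v \<sigma> x l q)) + v (Suc l) p)"

definition netNP where "netNP d W v \<sigma> l y = net d W v \<sigma> y l"
definition netP where "netP d W v \<sigma> l y = net d W v \<sigma> (\<lambda>j. sin (2 * pi * y j)) l"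

fun Bseq :: "(nat \<Rightarrow> real) \<Rightarrow> nat \<Rightarrow> nat \<Rightarrow> real" where
  "Bseq g n 0 = 0"
| "Bseq g n (Suc 0) = g n"
| "Bseq g n (Suc (Suc k)) =
     (\<Sum>i = Suc k..n - 1. real (n - 1 choose i) * g (n - i) * Bseq g i (Suc k))"

text \<open>Gamma l n = Gamma^[l]_n for l >= 1, n >= 1 (value 0 at n = 0 or l = 0 is a dummy).\<close>
primrec Gamma :: "(nat \<Rightarrow> real) \<Rightarrow> (nat \<Rightarrow> real) \<Rightarrow> nat \<Rightarrow> nat \<Rightarrow> real" where
  "Gamma A R 0 = (\<lambda>n. 0)"
| "Gamma A R (Suc l) =
     (if l = 0 then (\<lambda>n. if n = 0 then 0 else A n)
      else (\<lambda>n. \<Sum>k=1..n. A k * R l ^ k * Bseq (Gamma A R l) n k))"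

definition BB where "BB A R l n k = Bseq (Gamma A R l) n k"

end

theory Submission
  imports Defs
begin

text \<open>A Leibniz bound for products and a Faa di Bruno bound for compositions, both proved by
  induction on the order, show that if all derivatives of order \<open>n\<close> of a layer are bounded
  by \<open>\<beta>\<^sup>\<nu> c\<^sub>n\<close>, then those of \<open>\<sigma>\<close> applied to it are bounded by \<open>\<beta>\<^sup>\<nu> \<Sum>\<^sub>\<lambda> A\<^sub>\<lambda> B\<^sub>n\<^sub>,\<^sub>\<lambda>(c)\<close>, where
  \<open>B\<^sub>n\<^sub>,\<^sub>\<lambda>\<close> are the partial Bell polynomials; this is exactly the recursion defining \<open>\<Gamma>\<close>,
  and an induction over the layers gives (a).

  For (b) the network is composed coordinatewise with \<open>\<psi> t = sin (2\<pi>t)\<close>, whose derivatives satisfy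
  \<open>|\<psi>\<^sup>(\<^sup>a\<^sup>)| \<le> (2\<pi>)\<^sup>a\<close>. Each derivative in coordinate \<open>j\<close> of
  \<open>H(\<psi> y\<^sub>1, \<psi> y\<^sub>2, \<dots>)\<close> times a product of factors \<open>\<psi>\<^sup>(\<^sup>a\<^sup>)(y\<^sub>j)\<close> either falls on \<open>H\<close>,
  creating a new factor \<open>\<psi>'(y\<^sub>j)\<close>, or raises the order of one of the factors already present;
  counting these choices gives \<open>r\<close>-Stirling numbers, which are \<open>S(\<nu>\<^sub>j, m\<^sub>j)\<close> when no factor
  is present initially.\<close>

section \<open>Partial derivatives along lists of coordinates\<close>

definition partial_differentiable :: "nat \<Rightarrow> ((nat \<Rightarrow> real) \<Rightarrow> real) \<Rightarrow> (nat \<Rightarrow> real) \<Rightarrow> bool" where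
  "partial_differentiable j f y \<longleftrightarrow> (\<lambda>t. f (y(j := t))) differentiable (at (y j))"

lemma has_partial_derivative:
  "partial_differentiable j f y \<Longrightarrow> ((\<lambda>t. f (y(j := t))) has_real_derivative dpart j f y) (at (y j))"
  unfolding partial_differentiable_def dpart_def using DERIV_deriv_iff_real_differentiable by blast

lemma partial_derivativeI:
  assumes "((\<lambda>t. f (y(j := t))) has_real_derivative D) (at (y j))"
  shows "partial_differentiable j f y" "dpart j f y = D"
  using assms DERIV_imp_deriv
  by (auto simp: partial_differentiable_def dpart_def real_differentiable_def)

lemma dpart_add:
  assumes "partial_differentiable j f y" "partial_differentiable j g y"
  shows "partial_differentiable j (\<lambda>y. f y + g y) y"
    "dpart j (\<lambda>y. f y + g y) y = dpart j f y + dpart j g y"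
  using partial_derivativeI[OF DERIV_add[OF assms[THEN has_partial_derivative]]] by auto

lemma dpart_mult:
  assumes "partial_differentiable j f y" "partial_differentiable j g y"
  shows "partial_differentiable j (\<lambda>y. f y * g y) y"
    "dpart j (\<lambda>y. f y * g y) y = dpart j f y * g y + f y * dpart j g y"
  using partial_derivativeI[OF DERIV_mult[OF assms[THEN has_partial_derivative]]] by auto

lemma dpart_const: "partial_differentiable j (\<lambda>y. c) y" "dpart j (\<lambda>y. c) y = 0"
  using partial_derivativeI[of "\<lambda>y. c" y j 0] by auto

lemma dpart_coord:
  "partial_differentiable j (\<lambda>y. y i) y" "dpart j (\<lambda>y. y i) y = (if i = j then 1 else 0)"
proof -
  have "((\<lambda>t. (y(j := t)) i) has_real_derivative (if i = j then 1 else 0)) (at (y j))"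
    by (cases "i = j") (auto intro!: derivative_eq_intros)
  then show "partial_differentiable j (\<lambda>y. y i) y" "dpart j (\<lambda>y. y i) y = (if i = j then 1 else 0)"
    by (rule partial_derivativeI)+
qed

lemma dpart_comp:
  assumes "\<phi> differentiable (at (g y))" "partial_differentiable j g y"
  shows "partial_differentiable j (\<lambda>y. \<phi> (g y)) y"
    "dpart j (\<lambda>y. \<phi> (g y)) y = deriv \<phi> (g y) * dpart j g y"
proof -
  have "(\<phi> has_real_derivative deriv \<phi> (g y)) (at (g (y(j := y j))))"
    using assms(1) DERIV_deriv_iff_real_differentiable by simp
  from DERIV_chain2[OF this has_partial_derivative[OF assms(2)]]
  show "partial_differentiable j (\<lambda>y. \<phi> (g y)) y"
    "dpart j (\<lambda>y. \<phi> (g y)) y = deriv \<phi> (g y) * dpart j g y"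
    by (rule partial_derivativeI)+
qed

primrec smooth_upto :: "nat \<Rightarrow> ((nat \<Rightarrow> real) \<Rightarrow> real) \<Rightarrow> bool" where
  "smooth_upto 0 f \<longleftrightarrow> (\<forall>j y. partial_differentiable j f y)"
| "smooth_upto (Suc n) f \<longleftrightarrow>
     (\<forall>j y. partial_differentiable j f y) \<and> (\<forall>j. smooth_upto n (dpart j f))"

text \<open>Only the existence of all iterated partial derivatives is required; since no continuity
  is assumed, mixed partials need not commute, and all bounds below are stated for an arbitrary
  order of differentiation.\<close>
definition smooth :: "((nat \<Rightarrow> real) \<Rightarrow> real) \<Rightarrow> bool" where
  "smooth f \<longleftrightarrow> (\<forall>n. smooth_upto n f)"

lemma smooth_upto_partial_differentiable: "smooth_upto n f \<Longrightarrow> partial_differentiable j f y"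
  by (cases n) auto

lemma smooth_upto_Suc_imp: "smooth_upto (Suc n) f \<Longrightarrow> smooth_upto n f"
  by (induct n arbitrary: f) auto

lemma smooth_upto_add: "smooth_upto n f \<Longrightarrow> smooth_upto n g \<Longrightarrow> smooth_upto n (\<lambda>y. f y + g y)"
proof (induct n arbitrary: f g)
  case 0
  then show ?case using dpart_add by auto
next
  case (Suc n)
  have f: "\<And>j y. partial_differentiable j f y" and g: "\<And>j y. partial_differentiable j g y"
    using Suc.prems smooth_upto_partial_differentiable by blast+
  have "dpart j (\<lambda>y. f y + g y) = (\<lambda>y. dpart j f y + dpart j g y)" for j
    using dpart_add(2)[OF f g] by auto
  then show ?case using Suc f g dpart_add(1) by auto
qed

lemma smooth_upto_const: "smooth_upto n (\<lambda>y. c)"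
proof (induct n arbitrary: c)
  case 0
  then show ?case using dpart_const by auto
next
  case (Suc n)
  have "dpart j (\<lambda>y. c) = (\<lambda>y. 0)" for j using dpart_const(2) by auto
  then show ?case using Suc dpart_const(1) by auto
qed

lemma smooth_upto_mult: "smooth_upto n f \<Longrightarrow> smooth_upto n g \<Longrightarrow> smooth_upto n (\<lambda>y. f y * g y)"
proof (induct n arbitrary: f g)
  case 0
  then show ?case using dpart_mult by auto
next
  case (Suc n)
  have f: "\<And>j y. partial_differentiable j f y" and g: "\<And>j y. partial_differentiable j g y"
    using Suc.prems smooth_upto_partial_differentiable by blast+
  have "dpart j (\<lambda>y. f y * g y) = (\<lambda>y. dpart j f y * g y + f y * dpart j g y)" for j
    using dpart_mult(2)[OF f g] by auto
  moreover have "smooth_upto n (\<lambda>y. dpart j f y * g y + f y * dpart j g y)" for j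
    using Suc smooth_upto_Suc_imp by (intro smooth_upto_add) auto
  ultimately show ?case using f g dpart_mult(1) by auto
qed

lemma smooth_upto_coord: "smooth_upto n (\<lambda>y. y i)"
proof (cases n)
  case 0
  then show ?thesis using dpart_coord by auto
next
  case (Suc m)
  have "dpart j (\<lambda>y. y i) = (\<lambda>y. if i = j then 1 else 0)" for j using dpart_coord(2) by auto
  then show ?thesis using Suc dpart_coord(1) smooth_upto_const by auto
qed

lemma smooth_upto_comp:
  assumes \<phi>: "\<forall>k x. (deriv ^^ k) \<phi> differentiable (at x)"
  shows "smooth_upto n g \<Longrightarrow> smooth_upto n (\<lambda>y. (deriv ^^ k) \<phi> (g y))"
proof (induct n arbitrary: g k)
  case 0
  then show ?case using dpart_comp \<phi> by auto
next
  case (Suc n)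
  have g: "\<And>j y. partial_differentiable j g y" using Suc.prems smooth_upto_partial_differentiable by blast
  have "dpart j (\<lambda>y. (deriv ^^ k) \<phi> (g y)) = (\<lambda>y. (deriv ^^ Suc k) \<phi> (g y) * dpart j g y)" for j
    using dpart_comp(2)[OF _ g] \<phi> by auto
  moreover have "smooth_upto n (\<lambda>y. (deriv ^^ Suc k) \<phi> (g y))"
    using Suc smooth_upto_Suc_imp by blast
  then have "smooth_upto n (\<lambda>y. (deriv ^^ Suc k) \<phi> (g y) * dpart j g y)" for j
    using Suc.prems by (intro smooth_upto_mult) auto
  ultimately show ?case using g dpart_comp(1) \<phi> by (simp only: smooth_upto.simps) blast
qed

lemma smooth_partial_differentiable: "smooth f \<Longrightarrow> partial_differentiable j f y"
  unfolding smooth_def using smooth_upto_partial_differentiable by blast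

lemma smooth_dpart: "smooth f \<Longrightarrow> smooth (dpart j f)"
  unfolding smooth_def by (metis smooth_upto.simps(2))

lemma smooth_add: "smooth f \<Longrightarrow> smooth g \<Longrightarrow> smooth (\<lambda>y. f y + g y)"
  unfolding smooth_def using smooth_upto_add by blast

lemma smooth_mult: "smooth f \<Longrightarrow> smooth g \<Longrightarrow> smooth (\<lambda>y. f y * g y)"
  unfolding smooth_def using smooth_upto_mult by blast

lemma smooth_const: "smooth (\<lambda>y. c)"
  unfolding smooth_def using smooth_upto_const by blast

lemma smooth_coord: "smooth (\<lambda>y. y i)"
  unfolding smooth_def using smooth_upto_coord by blast

lemma smooth_comp:
  "\<forall>k x. (deriv ^^ k) \<phi> differentiable (at x) \<Longrightarrow> smooth g \<Longrightarrow> smooth (\<lambda>y. (deriv ^^ k) \<phi> (g y))"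
  unfolding smooth_def using smooth_upto_comp by blast

lemma smooth_sum: "finite Q \<Longrightarrow> (\<And>q. q \<in> Q \<Longrightarrow> smooth (f q)) \<Longrightarrow> smooth (\<lambda>y. \<Sum>q\<in>Q. f q y)"
  by (induct Q rule: finite_induct) (auto intro: smooth_add smooth_const)

definition dparts :: "nat list \<Rightarrow> ((nat \<Rightarrow> real) \<Rightarrow> real) \<Rightarrow> ((nat \<Rightarrow> real) \<Rightarrow> real)" where
  "dparts js f = fold dpart js f"

lemma dparts_Nil [simp]: "dparts [] f = f"
  and dparts_Cons [simp]: "dparts (j # js) f = dparts js (dpart j f)"
  by (simp_all add: dparts_def)

lemma dparts_add:
  "smooth f \<Longrightarrow> smooth g \<Longrightarrow> dparts js (\<lambda>y. f y + g y) = (\<lambda>y. dparts js f y + dparts js g y)"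
proof (induct js arbitrary: f g)
  case Nil
  then show ?case by simp
next
  case (Cons j js)
  have "dpart j (\<lambda>y. f y + g y) = (\<lambda>y. dpart j f y + dpart j g y)"
    using dpart_add(2) smooth_partial_differentiable Cons.prems by blast
  then show ?case using Cons by (simp add: smooth_dpart)
qed

lemma dparts_const: "dparts js (\<lambda>y. c) = (\<lambda>y. if js = [] then c else 0)"
proof (induct js arbitrary: c)
  case Nil
  then show ?case by simp
next
  case (Cons j js)
  have "dpart j (\<lambda>y. c) = (\<lambda>y. 0)" using dpart_const(2) by blast
  then show ?case using Cons by simp
qed

lemma dparts_cmult: "smooth f \<Longrightarrow> dparts js (\<lambda>y. c * f y) = (\<lambda>y. c * dparts js f y)"
proof (induct js arbitrary: f)
  case Nil
  then show ?case by simp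
next
  case (Cons j js)
  have "dpart j (\<lambda>y. c * f y) = (\<lambda>y. c * dpart j f y)"
    using dpart_mult(2)[OF dpart_const(1) smooth_partial_differentiable[OF Cons.prems]] dpart_const(2)
    by auto
  then show ?case using Cons by (simp add: smooth_dpart)
qed

lemma dparts_sum:
  "finite Q \<Longrightarrow> (\<And>q. q \<in> Q \<Longrightarrow> smooth (f q)) \<Longrightarrow>
   dparts js (\<lambda>y. \<Sum>q\<in>Q. f q y) = (\<lambda>y. \<Sum>q\<in>Q. dparts js (f q) y)"
proof (induct Q rule: finite_induct)
  case empty
  then show ?case using dparts_const[of js 0] by auto
next
  case (insert x F)
  then have "dparts js (\<lambda>y. f x y + (\<Sum>q\<in>F. f q y)) =
      (\<lambda>y. dparts js (f x) y + dparts js (\<lambda>y. \<Sum>q\<in>F. f q y) y)"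
    by (intro dparts_add smooth_sum) auto
  then show ?case using insert by simp
qed

lemma dparts_affine:
  assumes "finite Q" "\<And>i. i \<in> Q \<Longrightarrow> smooth (h i)"
  shows "dparts js (\<lambda>y. (\<Sum>i\<in>Q. w i * h i y) + c) =
    (\<lambda>y. (\<Sum>i\<in>Q. w i * dparts js (h i) y) + (if js = [] then c else 0))"
proof -
  have "smooth (\<lambda>y. \<Sum>i\<in>Q. w i * h i y)"
    using assms by (intro smooth_sum smooth_mult smooth_const) auto
  then have "dparts js (\<lambda>y. (\<Sum>i\<in>Q. w i * h i y) + c) =
      (\<lambda>y. dparts js (\<lambda>y. \<Sum>i\<in>Q. w i * h i y) y + dparts js (\<lambda>y. c) y)"
    by (rule dparts_add[OF _ smooth_const])
  also have "dparts js (\<lambda>y. \<Sum>i\<in>Q. w i * h i y) = (\<lambda>y. \<Sum>i\<in>Q. dparts js (\<lambda>y. w i * h i y) y)"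
    using assms by (intro dparts_sum smooth_mult smooth_const) auto
  finally show ?thesis using assms by (simp add: dparts_cmult dparts_const)
qed

lemma dparts_coord: "dparts (j # ks) (\<lambda>y. y i) = (\<lambda>y. if ks = [] \<and> i = j then 1 else 0)"
proof -
  have "dpart j (\<lambda>y. y i) = (\<lambda>y. if i = j then 1 else 0)" using dpart_coord(2) by auto
  then show ?thesis by (cases "i = j") (auto simp: dparts_const)
qed

section \<open>Leibniz and Faa di Bruno bounds\<close>

lemma binomial_convolution_Suc:
  fixes F G :: "nat \<Rightarrow> real"
  shows "(\<Sum>i\<le>Suc n. real (Suc n choose i) * F i * G (Suc n - i)) =
    (\<Sum>i\<le>n. real (n choose i) * F (Suc i) * G (n - i)) + (\<Sum>i\<le>n. real (n choose i) * F i * G (Suc n - i))"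
proof -
  have "(\<Sum>i\<le>Suc n. real (Suc n choose i) * F i * G (Suc n - i)) =
      F 0 * G (Suc n) + (\<Sum>i\<le>n. real (Suc n choose Suc i) * F (Suc i) * G (n - i))"
    by (subst sum.atMost_Suc_shift) simp
  also have "\<dots> = (\<Sum>i\<le>n. real (n choose i) * F (Suc i) * G (n - i))
      + (F 0 * G (Suc n) + (\<Sum>i\<le>n. real (n choose Suc i) * F (Suc i) * G (n - i)))"
    by (simp add: sum.distrib algebra_simps)
  also have "F 0 * G (Suc n) + (\<Sum>i\<le>n. real (n choose Suc i) * F (Suc i) * G (n - i))
      = (\<Sum>i\<le>Suc n. real (n choose i) * F i * G (Suc n - i))"
    by (subst sum.atMost_Suc_shift) simp
  finally show ?thesis by simp
qed

lemma dparts_mult_bound: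
  assumes "smooth f" "smooth g"
    and "\<And>ks y. set ks \<subseteq> J \<Longrightarrow> length ks \<le> length js \<Longrightarrow>
      \<bar>dparts ks f y\<bar> \<le> (\<Prod>i\<leftarrow>ks. \<beta> i) * F (length ks)"
    and "\<And>ks y. set ks \<subseteq> J \<Longrightarrow> length ks \<le> length js \<Longrightarrow>
      \<bar>dparts ks g y\<bar> \<le> (\<Prod>i\<leftarrow>ks. \<beta> i) * G (length ks)"
    and "set js \<subseteq> J"
  shows "\<bar>dparts js (\<lambda>y. f y * g y) y\<bar>
    \<le> (\<Prod>i\<leftarrow>js. \<beta> i) * (\<Sum>i\<le>length js. real (length js choose i) * F i * G (length js - i))"
  using assms
proof (induction js arbitrary: f g F G y)
  case Nil
  have "\<bar>f y * g y\<bar> \<le> F 0 * G 0"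
    using Nil.prems(3)[of "[]" y] Nil.prems(4)[of "[]" y] unfolding abs_mult
    by (intro mult_mono) auto
  then show ?case by simp
next
  case (Cons j js)
  let ?n = "length js"
  have j: "j \<in> J" and js: "set js \<subseteq> J" using Cons.prems(5) by auto
  have f': "smooth (dpart j f)" and g': "smooth (dpart j g)" using Cons.prems smooth_dpart by blast+
  have "dpart j (\<lambda>y. f y * g y) = (\<lambda>y. dpart j f y * g y + f y * dpart j g y)"
    using dpart_mult(2) Cons.prems(1,2) smooth_partial_differentiable by blast
  then have split: "dparts (j # js) (\<lambda>y. f y * g y) =
      (\<lambda>y. dparts js (\<lambda>y. dpart j f y * g y) y + dparts js (\<lambda>y. f y * dpart j g y) y)"
    using Cons.prems f' g' by (simp add: dparts_add smooth_mult)
  have f'_bound: "\<bar>dparts ks (dpart j f) y\<bar> \<le> (\<Prod>i\<leftarrow>ks. \<beta> i) * (\<beta> j * F (Suc (length ks)))"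
    if "set ks \<subseteq> J" "length ks \<le> ?n" for ks y
    using Cons.prems(3)[of "j # ks" y] that j by (simp add: algebra_simps)
  have g'_bound: "\<bar>dparts ks (dpart j g) y\<bar> \<le> (\<Prod>i\<leftarrow>ks. \<beta> i) * (\<beta> j * G (Suc (length ks)))"
    if "set ks \<subseteq> J" "length ks \<le> ?n" for ks y
    using Cons.prems(4)[of "j # ks" y] that j by (simp add: algebra_simps)
  have "\<bar>dparts (j # js) (\<lambda>y. f y * g y) y\<bar>
      \<le> \<bar>dparts js (\<lambda>y. dpart j f y * g y) y\<bar> + \<bar>dparts js (\<lambda>y. f y * dpart j g y) y\<bar>"
    unfolding split by (rule abs_triangle_ineq)
  also have "\<dots> \<le> (\<Prod>i\<leftarrow>js. \<beta> i) * (\<Sum>i\<le>?n. real (?n choose i) * (\<beta> j * F (Suc i)) * G (?n - i))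
      + (\<Prod>i\<leftarrow>js. \<beta> i) * (\<Sum>i\<le>?n. real (?n choose i) * F i * (\<beta> j * G (Suc (?n - i))))"
    using Cons.IH[OF f' Cons.prems(2) f'_bound _ js] Cons.IH[OF Cons.prems(1) g' _ g'_bound js]
      Cons.prems(3,4)
    by (intro add_mono) (auto simp del: prod_list.Cons)
  also have "\<dots> = (\<Prod>i\<leftarrow>j # js. \<beta> i) * ((\<Sum>i\<le>?n. real (?n choose i) * F (Suc i) * G (?n - i))
      + (\<Sum>i\<le>?n. real (?n choose i) * F i * G (Suc ?n - i)))"
    by (simp add: sum_distrib_left sum_distrib_right algebra_simps Suc_diff_le sum.distrib)
  also have "\<dots> = (\<Prod>i\<leftarrow>j # js. \<beta> i) *
      (\<Sum>i\<le>length (j # js). real (length (j # js) choose i) * F i * G (length (j # js) - i))"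
    by (simp only: binomial_convolution_Suc length_Cons)
  finally show ?case .
qed

lemma Bseq_Suc_Suc:
  "1 \<le> k \<Longrightarrow> Bseq c (Suc n) (Suc k) = (\<Sum>i=k..n. real (n choose i) * c (Suc n - i) * Bseq c i k)"
  by (cases k) auto

lemma Bseq_eq_0: "i < k \<Longrightarrow> 2 \<le> k \<Longrightarrow> Bseq c i k = 0"
proof -
  assume "i < k" "2 \<le> k"
  then obtain k' where "k = Suc (Suc k')" by (metis add_2_eq_Suc le_Suc_ex)
  then show ?thesis using \<open>i < k\<close> by auto
qed

lemma Bseq_nonneg: "(\<And>n. g n \<ge> 0) \<Longrightarrow> Bseq g n k \<ge> 0"
  by (induct g n k rule: Bseq.induct) (auto intro!: sum_nonneg)

lemma Bseq_scale: "Bseq (\<lambda>n. r * g n) n k = r ^ k * Bseq g n k"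
  by (induct g n k rule: Bseq.induct) (auto simp: sum_distrib_left algebra_simps)

text \<open>\<^const>\<open>Bseq\<close> is the recurrence of the partial Bell polynomials \<open>B\<^sub>n\<^sub>,\<^sub>k(c\<^sub>1, c\<^sub>2, \<dots>)\<close>, so
  this is the right-hand side of Faa di Bruno's formula for the \<open>n\<close>-th derivative of
  \<open>\<phi>\<^sup>(\<^sup>k\<^sup>) \<circ> g\<close> with \<open>|\<phi>\<^sup>(\<^sup>i\<^sup>)|\<close> replaced by \<open>A i\<close> and \<open>|g\<^sup>(\<^sup>i\<^sup>)|\<close> by \<open>c i\<close>.\<close>
definition faa_di_bruno :: "(nat \<Rightarrow> real) \<Rightarrow> (nat \<Rightarrow> real) \<Rightarrow> nat \<Rightarrow> nat \<Rightarrow> real" where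
  "faa_di_bruno A c k n = (if n = 0 then A k else (\<Sum>l=1..n. A (k + l) * Bseq c n l))"

lemma faa_di_bruno_Suc:
  "faa_di_bruno A c k (Suc n) = (\<Sum>i\<le>n. real (n choose i) * faa_di_bruno A c (Suc k) i * c (Suc n - i))"
proof -
  define X where "X i l = A (Suc k + l) * (real (n choose i) * c (Suc n - i) * Bseq c i l)" for i l
  have "faa_di_bruno A c k (Suc n) = (\<Sum>l=0..n. A (k + Suc l) * Bseq c (Suc n) (Suc l))"
    unfolding faa_di_bruno_def
    by (simp only: nat.distinct if_False sum.atLeast_Suc_atMost_Suc_shift One_nat_def)
      (simp add: comp_def)
  also have "\<dots> = A (Suc k) * c (Suc n) + (\<Sum>l=1..n. \<Sum>i=l..n. X i l)"
    by (subst sum.atLeast_Suc_atMost)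
      (auto simp: Bseq_Suc_Suc X_def sum_distrib_left intro!: sum.cong)
  also have "(\<Sum>l=1..n. \<Sum>i=l..n. X i l) = (\<Sum>l=1..n. \<Sum>i=1..n. X i l)"
    by (intro sum.cong refl sum.mono_neutral_left) (auto simp: X_def Bseq_eq_0)
  also have "\<dots> = (\<Sum>i=1..n. \<Sum>l=1..n. X i l)"
    by (rule sum.swap)
  also have "\<dots> = (\<Sum>i=1..n. \<Sum>l=1..i. X i l)"
    by (intro sum.cong refl sum.mono_neutral_right) (auto simp: X_def Bseq_eq_0)
  also have "A (Suc k) * c (Suc n) + \<dots> =
      (\<Sum>i\<le>n. real (n choose i) * faa_di_bruno A c (Suc k) i * c (Suc n - i))"
  proof -
    have "{..n} = insert 0 {1..n}" by auto
    then show ?thesis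
      by (auto simp: faa_di_bruno_def X_def sum_distrib_left sum_distrib_right algebra_simps
          intro!: sum.cong)
  qed
  finally show ?thesis .
qed

lemma dparts_comp_bound:
  assumes g: "smooth g"
    and g_bound: "\<And>ks y. set ks \<subseteq> J \<Longrightarrow> ks \<noteq> [] \<Longrightarrow>
      \<bar>dparts ks g y\<bar> \<le> (\<Prod>i\<leftarrow>ks. \<beta> i) * c (length ks)"
    and \<phi>: "\<forall>k x. (deriv ^^ k) \<phi> differentiable (at x)"
    and \<phi>_bound: "\<And>k x. k \<ge> 1 \<Longrightarrow> \<bar>(deriv ^^ k) \<phi> x\<bar> \<le> A k"
  shows "set js \<subseteq> J \<Longrightarrow> k \<ge> 1 \<or> js \<noteq> [] \<Longrightarrow>
    \<bar>dparts js (\<lambda>y. (deriv ^^ k) \<phi> (g y)) y\<bar> \<le> (\<Prod>i\<leftarrow>js. \<beta> i) * faa_di_bruno A c k (length js)"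
proof (induction "length js" arbitrary: js k y rule: less_induct)
  case less
  show ?case
  proof (cases js)
    case Nil
    then show ?thesis using less.prems \<phi>_bound by (auto simp: faa_di_bruno_def)
  next
    case (Cons j ks)
    let ?m = "length ks"
    have j: "j \<in> J" and ks: "set ks \<subseteq> J" using less.prems Cons by auto
    have "dpart j (\<lambda>y. (deriv ^^ k) \<phi> (g y)) = (\<lambda>y. (deriv ^^ Suc k) \<phi> (g y) * dpart j g y)"
      using dpart_comp(2) \<phi> g smooth_partial_differentiable by fastforce
    then have "\<bar>dparts js (\<lambda>y. (deriv ^^ k) \<phi> (g y)) y\<bar>
        = \<bar>dparts ks (\<lambda>y. (deriv ^^ Suc k) \<phi> (g y) * dpart j g y) y\<bar>"
      using Cons by simp
    also have "\<dots> \<le> (\<Prod>i\<leftarrow>ks. \<beta> i) *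
        (\<Sum>i\<le>?m. real (?m choose i) * faa_di_bruno A c (Suc k) i * (\<beta> j * c (Suc (?m - i))))"
    proof (rule dparts_mult_bound[OF smooth_comp[OF \<phi> g] smooth_dpart[OF g] _ _ ks])
      fix ks' y assume "set ks' \<subseteq> J" "length ks' \<le> ?m"
      then show "\<bar>dparts ks' (\<lambda>y. (deriv ^^ Suc k) \<phi> (g y)) y\<bar>
          \<le> (\<Prod>i\<leftarrow>ks'. \<beta> i) * faa_di_bruno A c (Suc k) (length ks')"
        using Cons by (intro less.hyps) auto
      show "\<bar>dparts ks' (dpart j g) y\<bar> \<le> (\<Prod>i\<leftarrow>ks'. \<beta> i) * (\<beta> j * c (Suc (length ks')))"
        using g_bound[of "j # ks'" y] j \<open>set ks' \<subseteq> J\<close> by (simp add: algebra_simps)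
    qed
    also have "\<dots> = (\<Prod>i\<leftarrow>js. \<beta> i) * faa_di_bruno A c k (length js)"
      using Cons by (simp add: faa_di_bruno_Suc sum_distrib_left algebra_simps Suc_diff_le)
    finally show ?thesis .
  qed
qed

section \<open>Derivative bounds for the network\<close>

lemma dparts_affine_bound:
  assumes "\<And>j. j < s \<Longrightarrow> \<bar>w j\<bar> \<le> \<beta> j" "set ks \<subseteq> {..<s}" "ks \<noteq> []"
  shows "\<bar>dparts ks (\<lambda>x. (\<Sum>j<s. w j * x j) + b) y\<bar> \<le> (\<Prod>i\<leftarrow>ks. \<beta> i) * of_bool (length ks = 1)"
proof -
  obtain j ks' where ks: "ks = j # ks'" using assms(3) by (cases ks) auto
  have j: "j < s" using assms(2) ks by auto
  have "dparts ks (\<lambda>x. (\<Sum>j<s. w j * x j) + b) y = (\<Sum>i<s. w i * dparts ks (\<lambda>x. x i) y)"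
    using assms(3) by (simp add: dparts_affine smooth_coord)
  also have "\<dots> = (\<Sum>i<s. if i = j \<and> ks' = [] then w i else 0)"
    unfolding ks dparts_coord by (intro sum.cong) auto
  also have "\<dots> = (if ks' = [] then w j else 0)"
    using j by (cases "ks' = []") auto
  finally show ?thesis using assms(1) j ks by simp
qed

lemma dparts_layer_bound:
  fixes n :: nat
  assumes "\<And>q. smooth (h q)" "\<And>q. q < n \<Longrightarrow> \<bar>dparts ks (h q) y\<bar> \<le> K"
    and "(\<Sum>q<n. \<bar>w q\<bar>) \<le> R" "K \<ge> 0" "ks \<noteq> []"
  shows "\<bar>dparts ks (\<lambda>x. (\<Sum>q<n. w q * h q x) + b) y\<bar> \<le> R * K"
proof -
  have "\<bar>dparts ks (\<lambda>x. (\<Sum>q<n. w q * h q x) + b) y\<bar> = \<bar>\<Sum>q<n. w q * dparts ks (h q) y\<bar>"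
    using assms(5) by (subst dparts_affine) (auto intro: assms(1))
  also have "\<dots> \<le> (\<Sum>q<n. \<bar>w q\<bar> * K)"
    unfolding abs_mult[symmetric] using assms(2)
    by (intro order_trans[OF sum_abs] sum_mono) (auto simp: abs_mult intro: mult_left_mono)
  also have "\<dots> \<le> R * K"
    using assms(3,4) by (simp add: sum_distrib_right[symmetric] mult_right_mono)
  finally show ?thesis .
qed

lemma smooth_net:
  assumes "\<forall>n x. (deriv ^^ n) \<sigma> differentiable (at x)"
  shows "smooth (\<lambda>x. net d W v \<sigma> x l p)"
proof (induct l arbitrary: p)
  case 0
  show ?case by (simp, intro smooth_add smooth_sum smooth_mult smooth_const smooth_coord) auto
next
  case (Suc l)
  have "smooth (\<lambda>x. \<sigma> (net d W v \<sigma> x l q))" for q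
    using smooth_comp[OF assms Suc, of 0] by simp
  then show ?case by (simp, intro smooth_add smooth_sum smooth_mult smooth_const) auto
qed

lemma Bseq_indicator_one: "1 \<le> n \<Longrightarrow> 1 \<le> l \<Longrightarrow> Bseq (\<lambda>n. of_bool (n = 1)) n l = of_bool (n = l)"
proof (induct l arbitrary: n rule: less_induct)
  case (less l)
  show ?case
  proof (cases "l = 1")
    case False
    with less.prems(2) have "2 \<le> l" by simp
    then obtain k where l: "l = Suc (Suc k)" by (metis add_2_eq_Suc le_Suc_ex)
    have "Bseq (\<lambda>n. of_bool (n = 1)) n l =
        (\<Sum>i=Suc k..n - 1. real (n - 1 choose i) * of_bool (n - i = 1) * of_bool (i = Suc k))"
      unfolding l Bseq.simps(3) using less.hyps l by (intro sum.cong refl) auto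
    also have "\<dots> = (\<Sum>i=Suc k..n - 1. if i = Suc k then of_bool (n = l) else 0)"
      using l by (intro sum.cong refl) auto
    also have "\<dots> = of_bool (n = l)"
      using l by auto
    finally show ?thesis .
  qed simp
qed

lemma Gamma_nonneg: "(\<And>n. n \<ge> 1 \<Longrightarrow> A n \<ge> 0) \<Longrightarrow> (\<And>l. R l \<ge> 0) \<Longrightarrow> Gamma A R l n \<ge> 0"
proof (induct l arbitrary: n)
  case (Suc l)
  then show ?case
    by (auto intro!: sum_nonneg mult_nonneg_nonneg Bseq_nonneg zero_le_power)
qed simp

lemma faa_di_bruno_Gamma_1: "1 \<le> n \<Longrightarrow> faa_di_bruno A (\<lambda>n. of_bool (n = 1)) 0 n = Gamma A R 1 n"
proof -
  assume n: "1 \<le> n"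
  have "(\<Sum>k=1..n. A k * Bseq (\<lambda>n. of_bool (n = 1)) n k) = (\<Sum>k=1..n. if k = n then A k else 0)"
    using n Bseq_indicator_one[of n] by (intro sum.cong refl) auto
  then show ?thesis using n by (simp add: faa_di_bruno_def)
qed

lemma faa_di_bruno_Gamma_Suc:
  "1 \<le> l \<Longrightarrow> 1 \<le> n \<Longrightarrow> faa_di_bruno A (\<lambda>n. R l * Gamma A R l n) 0 n = Gamma A R (Suc l) n"
  by (simp add: faa_di_bruno_def Bseq_scale algebra_simps)

locale network_bounds =
  fixes s L :: nat and d :: "nat \<Rightarrow> nat"
    and W :: "nat \<Rightarrow> nat \<Rightarrow> nat \<Rightarrow> real" and v :: "nat \<Rightarrow> nat \<Rightarrow> real"
    and \<sigma> :: "real \<Rightarrow> real" and \<beta> R A :: "nat \<Rightarrow> real"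
  assumes d0: "d 0 = s"
    and \<sigma>_smooth: "\<forall>n x. (deriv ^^ n) \<sigma> differentiable (at x)"
    and \<beta>_nonneg: "\<And>j. \<beta> j \<ge> 0" and R_nonneg: "\<And>l. R l \<ge> 0"
    and W0_bound: "\<And>j p. j < s \<Longrightarrow> p < d 1 \<Longrightarrow> \<bar>W 0 p j\<bar> \<le> \<beta> j"
    and W_row_bound: "\<And>l p. 1 \<le> l \<Longrightarrow> l \<le> L \<Longrightarrow> p < d (Suc l) \<Longrightarrow> (\<Sum>q<d l. \<bar>W l p q\<bar>) \<le> R l"
    and \<sigma>_deriv_bound: "\<And>n x. 1 \<le> n \<Longrightarrow> \<bar>(deriv ^^ n) \<sigma> x\<bar> \<le> A n"
begin

lemma A_nonneg: "1 \<le> n \<Longrightarrow> A n \<ge> 0"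
  using \<sigma>_deriv_bound abs_ge_zero order_trans by metis

lemma dparts_net_Suc_bound:
  assumes "Suc l \<le> L" "p < d (Suc (Suc l))" "set ks \<subseteq> {..<s}" "ks \<noteq> []"
    and "\<And>q ks y. q < d (Suc l) \<Longrightarrow> set ks \<subseteq> {..<s} \<Longrightarrow> ks \<noteq> [] \<Longrightarrow>
      \<bar>dparts ks (\<lambda>x. \<sigma> (net d W v \<sigma> x l q)) y\<bar> \<le> (\<Prod>i\<leftarrow>ks. \<beta> i) * Gamma A R (Suc l) (length ks)"
  shows "\<bar>dparts ks (\<lambda>x. net d W v \<sigma> x (Suc l) p) y\<bar>
    \<le> (\<Prod>i\<leftarrow>ks. \<beta> i) * (R (Suc l) * Gamma A R (Suc l) (length ks))"
proof -
  have "\<bar>dparts ks (\<lambda>x. net d W v \<sigma> x (Suc l) p) y\<bar>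
      \<le> R (Suc l) * ((\<Prod>i\<leftarrow>ks. \<beta> i) * Gamma A R (Suc l) (length ks))"
    unfolding net.simps using assms
    by (intro dparts_layer_bound smooth_comp[OF \<sigma>_smooth smooth_net[OF \<sigma>_smooth], of 0, simplified]
        W_row_bound mult_nonneg_nonneg Gamma_nonneg[OF A_nonneg R_nonneg] prod_list_nonneg)
      (auto simp: \<beta>_nonneg)
  then show ?thesis by (simp add: algebra_simps)
qed

lemma dparts_sigma_net_bound:
  "l < L \<Longrightarrow> q < d (Suc l) \<Longrightarrow> set ks \<subseteq> {..<s} \<Longrightarrow> ks \<noteq> [] \<Longrightarrow>
    \<bar>dparts ks (\<lambda>x. \<sigma> (net d W v \<sigma> x l q)) y\<bar> \<le> (\<Prod>i\<leftarrow>ks. \<beta> i) * Gamma A R (Suc l) (length ks)"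
proof (induct l arbitrary: q ks y)
  case 0
  have "\<bar>dparts ks' (\<lambda>x. net d W v \<sigma> x 0 q) y'\<bar> \<le> (\<Prod>i\<leftarrow>ks'. \<beta> i) * of_bool (length ks' = 1)"
    if "set ks' \<subseteq> {..<s}" "ks' \<noteq> []" for ks' y'
    unfolding net.simps d0 using that 0 by (intro dparts_affine_bound W0_bound) auto
  then have "\<bar>dparts ks (\<lambda>x. (deriv ^^ 0) \<sigma> (net d W v \<sigma> x 0 q)) y\<bar>
      \<le> (\<Prod>i\<leftarrow>ks. \<beta> i) * faa_di_bruno A (\<lambda>n. of_bool (n = 1)) 0 (length ks)"
    using 0 by (intro dparts_comp_bound[OF smooth_net[OF \<sigma>_smooth] _ \<sigma>_smooth \<sigma>_deriv_bound]) auto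
  then show ?case using 0 faa_di_bruno_Gamma_1[of "length ks" A R] by (cases ks) auto
next
  case (Suc l)
  have "\<bar>dparts ks (\<lambda>x. (deriv ^^ 0) \<sigma> (net d W v \<sigma> x (Suc l) q)) y\<bar>
      \<le> (\<Prod>i\<leftarrow>ks. \<beta> i) * faa_di_bruno A (\<lambda>n. R (Suc l) * Gamma A R (Suc l) n) 0 (length ks)"
    using Suc by (intro dparts_comp_bound[OF smooth_net[OF \<sigma>_smooth] _ \<sigma>_smooth \<sigma>_deriv_bound]
        dparts_net_Suc_bound) auto
  then show ?case using Suc.prems faa_di_bruno_Gamma_Suc[of "Suc l" "length ks" A R]
    by (cases ks) auto
qed

lemma dparts_net_bound:
  assumes "1 \<le> l" "l \<le> L" "p < d (Suc l)" "set ks \<subseteq> {..<s}" "ks \<noteq> []"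
  shows "\<bar>dparts ks (\<lambda>x. net d W v \<sigma> x l p) y\<bar> \<le> (\<Prod>i\<leftarrow>ks. \<beta> i) * (R l * Gamma A R l (length ks))"
proof -
  obtain l' where l: "l = Suc l'" using assms(1) by (cases l) auto
  show ?thesis
    using assms unfolding l by (intro dparts_net_Suc_bound dparts_sigma_net_bound) auto
qed

end

section \<open>Coordinatewise composition with a feature map\<close>

text \<open>\<open>r_Stirling n k r\<close> is the \<open>r\<close>-Stirling number of the second kind \<open>{n + r, k + r}\<^sub>r\<close>:
  the number of partitions of \<open>n + r\<close> elements into \<open>k + r\<close> blocks such that \<open>r\<close> given elements
  lie in distinct blocks. The first free element either joins one of the \<open>r\<close> distinguished
  blocks or opens a new one, which then counts as distinguished.\<close>
fun r_Stirling :: "nat \<Rightarrow> nat \<Rightarrow> nat \<Rightarrow> nat" where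
  "r_Stirling 0 k r = (if k = 0 then 1 else 0)"
| "r_Stirling (Suc n) 0 r = r * r_Stirling n 0 r"
| "r_Stirling (Suc n) (Suc k) r = r * r_Stirling n (Suc k) r + r_Stirling n k (Suc r)"

lemma r_Stirling_eq_0: "n < k \<Longrightarrow> r_Stirling n k r = 0"
  by (induct n k r rule: r_Stirling.induct) auto

lemma r_Stirling_Suc_last:
  "r_Stirling (Suc n) k r = (k + r) * r_Stirling n k r + (case k of 0 \<Rightarrow> 0 | Suc k' \<Rightarrow> r_Stirling n k' r)"
proof (induct n arbitrary: k r)
  case 0
  then show ?case by (cases k) auto
next
  case (Suc n)
  show ?case
  proof (cases k)
    case (Suc k')
    have "r_Stirling (Suc (Suc n)) k r = r * r_Stirling (Suc n) k r + r_Stirling (Suc n) k' (Suc r)"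
      using Suc by simp
    also have "\<dots> = r * ((k + r) * r_Stirling n k r + r_Stirling n k' r)
        + ((k' + Suc r) * r_Stirling n k' (Suc r) + (case k' of 0 \<Rightarrow> 0 | Suc k'' \<Rightarrow> r_Stirling n k'' (Suc r)))"
      using Suc.hyps[of k r] Suc.hyps[of k' "Suc r"] Suc by simp
    also have "\<dots> = (k + r) * (r * r_Stirling n k r + r_Stirling n k' (Suc r))
        + (r * r_Stirling n k' r + (case k' of 0 \<Rightarrow> 0 | Suc k'' \<Rightarrow> r_Stirling n k'' (Suc r)))"
      using Suc by (simp add: algebra_simps)
    also have "\<dots> = (k + r) * r_Stirling (Suc n) k r + r_Stirling (Suc n) k' r"
      using Suc by (cases k') simp_all
    finally show ?thesis using Suc by simp
  qed (use Suc.hyps[of 0 r] in simp)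
qed

lemma r_Stirling_0: "r_Stirling n k 0 = Stirling n k"
proof (induct n arbitrary: k)
  case 0
  then show ?case by (cases k) auto
next
  case (Suc n)
  then show ?case
    by (cases k) (simp_all del: r_Stirling.simps(2,3) add: r_Stirling_Suc_last[of n _ 0])
qed

lemma finite_atMost_fun:
  fixes \<nu> :: "'a \<Rightarrow> nat"
  assumes "finite {j. \<nu> j \<noteq> 0}"
  shows "finite {..\<nu>}"
proof -
  define S where "S = {j. \<nu> j \<noteq> 0}"
  have "{..\<nu>} \<subseteq> (\<lambda>f j. if j \<in> S then f j else 0) ` PiE S (\<lambda>j. {0..\<nu> j})"
  proof
    fix m assume "m \<in> {..\<nu>}"
    then have "m = (\<lambda>j. if j \<in> S then restrict m S j else 0)"
      and "restrict m S \<in> PiE S (\<lambda>j. {0..\<nu> j})"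
      by (auto simp: S_def le_fun_def fun_eq_iff) (metis le_zero_eq)
    then show "m \<in> (\<lambda>f j. if j \<in> S then f j else 0) ` PiE S (\<lambda>j. {0..\<nu> j})" by blast
  qed
  then show ?thesis
    by (rule finite_subset) (use assms in \<open>auto simp: S_def intro!: finite_PiE\<close>)
qed

lemma atMost_fun_zero: "{..(\<lambda>_. 0 :: nat)} = {\<lambda>_. 0}"
  by (auto simp: le_fun_def fun_eq_iff)

lemma finite_support_fun_upd: "finite {i. \<nu> i \<noteq> 0} \<Longrightarrow> finite {i. (\<nu>(j := x)) i \<noteq> 0}"
  by (rule finite_subset[of _ "insert j {i. \<nu> i \<noteq> 0}"]) auto

lemma sum_atMost_fun_upd_Suc:
  fixes \<nu> :: "'a \<Rightarrow> nat"
  assumes "finite {j. \<nu> j \<noteq> 0}" "\<And>m. m \<le> \<nu>(j := Suc (\<nu> j)) \<Longrightarrow> m j = Suc (\<nu> j) \<Longrightarrow> g m = 0"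
  shows "(\<Sum>m\<le>\<nu>(j := Suc (\<nu> j)). g m) = (\<Sum>m\<le>\<nu>. g m)"
proof (rule sum.mono_neutral_right)
  show "finite {..\<nu>(j := Suc (\<nu> j))}"
    using assms(1) by (intro finite_atMost_fun finite_support_fun_upd)
  show "{..\<nu>} \<subseteq> {..\<nu>(j := Suc (\<nu> j))}" by (auto simp: le_fun_def le_SucI)
  show "\<forall>m\<in>{..\<nu>(j := Suc (\<nu> j))} - {..\<nu>}. g m = 0"
  proof
    fix m assume m: "m \<in> {..\<nu>(j := Suc (\<nu> j))} - {..\<nu>}"
    then have le: "\<And>i. m i \<le> (\<nu>(j := Suc (\<nu> j))) i" and "\<not> m \<le> \<nu>"
      by (auto simp: le_fun_def)
    then obtain i where i: "m i > \<nu> i" by (auto simp: le_fun_def not_le)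
    then have "i = j" using le[of i] by (auto split: if_splits)
    then have "m j = Suc (\<nu> j)" using le[of j] i by simp
    then show "g m = 0" using m assms(2) by auto
  qed
qed

lemma sum_atMost_fun_upd_Suc_shift:
  fixes \<nu> :: "'a \<Rightarrow> nat"
  assumes "finite {j. \<nu> j \<noteq> 0}" "\<And>m. m j = 0 \<Longrightarrow> g m = 0"
  shows "(\<Sum>m\<le>\<nu>(j := Suc (\<nu> j)). g m) = (\<Sum>m\<le>\<nu>. g (m(j := Suc (m j))))"
proof -
  define h where "h m = m(j := Suc (m j))" for m :: "'a \<Rightarrow> nat"
  have "(\<Sum>m\<le>\<nu>(j := Suc (\<nu> j)). g m) = sum g (h ` {..\<nu>})"
  proof (intro sum.mono_neutral_right finite_atMost_fun finite_support_fun_upd assms(1) ballI)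
    show "h ` {..\<nu>} \<subseteq> {..\<nu>(j := Suc (\<nu> j))}" by (auto simp: h_def le_fun_def)
    fix m assume m: "m \<in> {..\<nu>(j := Suc (\<nu> j))} - h ` {..\<nu>}"
    show "g m = 0"
    proof (cases "m j")
      case (Suc k)
      then have "m(j := k) \<in> {..\<nu>}" and "h (m(j := k)) = m"
        using m by (auto simp: h_def le_fun_def split: if_splits)
      then show ?thesis using m by (metis DiffD2 image_eqI)
    qed (use assms(2) in simp)
  qed
  also have "\<dots> = (\<Sum>m\<le>\<nu>. g (h m))"
  proof (rule sum.reindex_cong[OF inj_on_subset[of h UNIV] refl refl])
    show "inj h"
    proof (rule injI, rule ext)
      fix m m' i assume "h m = h m'"
      then have "h m i = h m' i" by simp
      then show "m i = m' i" by (cases "i = j") (auto simp: h_def)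
    qed
  qed simp
  finally show ?thesis by (simp add: h_def)
qed

lemma sum_r_Stirling_fun_upd_Suc:
  fixes M :: "(nat \<Rightarrow> nat) \<Rightarrow> real" and \<nu> b :: "nat \<Rightarrow> nat"
  assumes j: "j < s" and \<nu>: "finite {i. \<nu> i \<noteq> 0}"
  shows "(\<Sum>m\<le>\<nu>(j := Suc (\<nu> j)). M m * (\<Prod>k<s. real (r_Stirling ((\<nu>(j := Suc (\<nu> j))) k) (m k) (b k)))) =
     real (b j) * (\<Sum>m\<le>\<nu>. M m * (\<Prod>k<s. real (r_Stirling (\<nu> k) (m k) (b k))))
   + (\<Sum>m\<le>\<nu>. M (m(j := Suc (m j))) * (\<Prod>k<s. real (r_Stirling (\<nu> k) (m k) ((b(j := Suc (b j))) k))))"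
proof -
  define rest where "rest m = (\<Prod>k\<in>{..<s} - {j}. real (r_Stirling (\<nu> k) (m k) (b k)))" for m
  have js: "j \<in> {..<s}" using j by simp
  have split: "(\<Prod>k<s. real (r_Stirling (\<mu> k) (m k) (b' k))) = real (r_Stirling (\<mu> j) (m j) (b' j)) * rest m"
    if "\<And>k. k \<noteq> j \<Longrightarrow> \<mu> k = \<nu> k \<and> b' k = b k" for \<mu> m b'
    unfolding rest_def using that by (subst prod.remove[OF _ js]) (auto intro!: prod.cong)
  have rest_upd: "rest (m(j := i)) = rest m" for m i
    unfolding rest_def by (auto intro!: prod.cong)
  have "(\<Sum>m\<le>\<nu>(j := Suc (\<nu> j)). M m * (\<Prod>k<s. real (r_Stirling ((\<nu>(j := Suc (\<nu> j))) k) (m k) (b k)))) =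
      (\<Sum>m\<le>\<nu>(j := Suc (\<nu> j)). real (b j) * (M m * (real (r_Stirling (\<nu> j) (m j) (b j)) * rest m)))
    + (\<Sum>m\<le>\<nu>(j := Suc (\<nu> j)). case m j of 0 \<Rightarrow> 0
         | Suc i \<Rightarrow> M m * (real (r_Stirling (\<nu> j) i (Suc (b j))) * rest m))"
    by (subst sum.distrib[symmetric], intro sum.cong refl, subst split)
      (auto simp: algebra_simps split: nat.split)
  also have "(\<Sum>m\<le>\<nu>(j := Suc (\<nu> j)). real (b j) * (M m * (real (r_Stirling (\<nu> j) (m j) (b j)) * rest m)))
      = real (b j) * (\<Sum>m\<le>\<nu>. M m * (\<Prod>k<s. real (r_Stirling (\<nu> k) (m k) (b k))))"
    by (subst sum_atMost_fun_upd_Suc[OF \<nu>]) (auto simp: r_Stirling_eq_0 sum_distrib_left split)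
  also have "(\<Sum>m\<le>\<nu>(j := Suc (\<nu> j)). case m j of 0 \<Rightarrow> 0
         | Suc i \<Rightarrow> M m * (real (r_Stirling (\<nu> j) i (Suc (b j))) * rest m))
      = (\<Sum>m\<le>\<nu>. M (m(j := Suc (m j))) * (\<Prod>k<s. real (r_Stirling (\<nu> k) (m k) ((b(j := Suc (b j))) k))))"
    by (subst sum_atMost_fun_upd_Suc_shift[OF \<nu>]) (auto simp: split rest_upd)
  finally show ?thesis .
qed

lemma count_list_Nil_fun: "count_list [] = (\<lambda>_. 0)"
  by (rule ext) simp

lemma count_list_Cons_fun: "count_list (j # js) = (count_list js)(j := Suc (count_list js j))"
  by (rule ext) simp

lemma finite_support_count_list: "finite {k. count_list js k \<noteq> 0}"
  by (rule finite_subset[of _ "set js"]) (auto simp: count_list_0_iff)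

lemma dparts_dpart_count_list_bound:
  assumes "j \<in> J" "set ks \<subseteq> J"
    and "\<And>ks x. set ks \<subseteq> J \<Longrightarrow> ks \<noteq> [] \<Longrightarrow> \<bar>dparts ks H x\<bar> \<le> M (count_list ks)"
  shows "\<bar>dparts ks (dpart j H) x\<bar> \<le> M ((count_list ks)(j := Suc (count_list ks j)))"
proof -
  have "set (j # ks) \<subseteq> J" using assms(1,2) by simp
  from assms(3)[OF this, of x] show ?thesis unfolding count_list_Cons_fun dparts_Cons by simp
qed

locale feature_map =
  fixes \<psi> :: "real \<Rightarrow> real" and c :: real
  assumes \<psi>_smooth: "\<forall>k x. (deriv ^^ k) \<psi> differentiable (at x)"
    and \<psi>_bound: "\<And>k x. \<bar>(deriv ^^ k) \<psi> x\<bar> \<le> c ^ k"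
begin

lemma has_real_derivative_\<psi>: "((deriv ^^ k) \<psi> has_real_derivative (deriv ^^ Suc k) \<psi> x) (at x)"
  using \<psi>_smooth DERIV_deriv_iff_real_differentiable by simp

lemma dpart_comp_\<psi>:
  assumes "partial_differentiable j H (\<lambda>i. \<psi> (y i))"
  shows "partial_differentiable j (\<lambda>y. H (\<lambda>i. \<psi> (y i))) y"
    "dpart j (\<lambda>y. H (\<lambda>i. \<psi> (y i))) y = dpart j H (\<lambda>i. \<psi> (y i)) * deriv \<psi> (y j)"
proof -
  have "(\<lambda>t. H (\<lambda>i. \<psi> ((y(j := t)) i))) = (\<lambda>t. H ((\<lambda>i. \<psi> (y i))(j := \<psi> t)))"
    by (auto simp: fun_eq_iff intro!: arg_cong[where f = H])
  moreover have "((\<lambda>u. H ((\<lambda>i. \<psi> (y i))(j := u))) has_real_derivative dpart j H (\<lambda>i. \<psi> (y i))) (at (\<psi> (y j)))"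
    using has_partial_derivative[OF assms] by simp
  ultimately have "((\<lambda>t. H (\<lambda>i. \<psi> ((y(j := t)) i))) has_real_derivative
      dpart j H (\<lambda>i. \<psi> (y i)) * deriv \<psi> (y j)) (at (y j))"
    using DERIV_chain2 has_real_derivative_\<psi>[of 0 "y j"] by simp
  then show "partial_differentiable j (\<lambda>y. H (\<lambda>i. \<psi> (y i))) y"
    "dpart j (\<lambda>y. H (\<lambda>i. \<psi> (y i))) y = dpart j H (\<lambda>i. \<psi> (y i)) * deriv \<psi> (y j)"
    by (rule partial_derivativeI)+
qed

lemma smooth_\<psi>_coord: "smooth (\<lambda>y. (deriv ^^ k) \<psi> (y j))"
  using smooth_comp[OF \<psi>_smooth smooth_coord] .

lemma smooth_upto_comp_\<psi>: "smooth_upto n H \<Longrightarrow> smooth_upto n (\<lambda>y. H (\<lambda>i. \<psi> (y i)))"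
proof (induct n arbitrary: H)
  case 0
  then show ?case using dpart_comp_\<psi>(1) smooth_upto_partial_differentiable by auto
next
  case (Suc n)
  have H: "\<And>j y. partial_differentiable j H y" using Suc.prems smooth_upto_partial_differentiable by blast
  have "dpart j (\<lambda>y. H (\<lambda>i. \<psi> (y i))) = (\<lambda>y. dpart j H (\<lambda>i. \<psi> (y i)) * deriv \<psi> (y j))" for j
    using dpart_comp_\<psi>(2)[OF H] by auto
  moreover have "smooth_upto n (\<lambda>y. deriv \<psi> (y j))" for j
    using smooth_\<psi>_coord[of 1 j] unfolding smooth_def by simp
  then have "smooth_upto n (\<lambda>y. dpart j H (\<lambda>i. \<psi> (y i)) * deriv \<psi> (y j))" for j
    using Suc by (intro smooth_upto_mult) auto
  ultimately show ?case using H dpart_comp_\<psi>(1) by (simp only: smooth_upto.simps) blast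
qed

lemma smooth_comp_\<psi>: "smooth H \<Longrightarrow> smooth (\<lambda>y. H (\<lambda>i. \<psi> (y i)))"
  unfolding smooth_def using smooth_upto_comp_\<psi> by blast

definition dfactors :: "(nat \<times> nat) list \<Rightarrow> (nat \<Rightarrow> real) \<Rightarrow> real" where
  "dfactors bl y = (\<Prod>(j, a)\<leftarrow>bl. (deriv ^^ a) \<psi> (y j))"

definition raise_order :: "(nat \<times> nat) list \<Rightarrow> nat \<Rightarrow> (nat \<times> nat) list" where
  "raise_order bl i = bl[i := (fst (bl ! i), Suc (snd (bl ! i)))]"

lemma dfactors_Nil [simp]: "dfactors [] y = 1"
  and dfactors_Cons [simp]: "dfactors ((j, a) # bl) y = (deriv ^^ a) \<psi> (y j) * dfactors bl y"
  by (simp_all add: dfactors_def)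

lemma smooth_dfactors: "smooth (dfactors bl)"
proof (induct bl)
  case Nil
  then show ?case using smooth_const by (simp add: dfactors_def)
next
  case (Cons b bl)
  then show ?case
    using smooth_mult[OF smooth_\<psi>_coord Cons] by (cases b) (simp add: dfactors_def)
qed

lemma dfactors_bound: "\<bar>dfactors bl y\<bar> \<le> c ^ sum_list (map snd bl)"
proof (induct bl)
  case (Cons b bl)
  obtain j a where b: "b = (j, a)" by (cases b)
  have "\<bar>dfactors (b # bl) y\<bar> = \<bar>(deriv ^^ a) \<psi> (y j)\<bar> * \<bar>dfactors bl y\<bar>" by (simp add: b abs_mult)
  also have "\<dots> \<le> c ^ a * c ^ sum_list (map snd bl)"
    using Cons \<psi>_bound order_trans[OF abs_ge_zero \<psi>_bound] by (intro mult_mono) auto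
  finally show ?case by (simp add: b power_add)
qed simp

lemma raise_order_Cons_0: "raise_order (b # bl) 0 = (fst b, Suc (snd b)) # bl"
  and raise_order_Cons_Suc: "raise_order (b # bl) (Suc i) = b # raise_order bl i"
  by (simp_all add: raise_order_def)

lemma has_partial_derivative_dfactors:
  "((\<lambda>t. dfactors bl (y(j := t))) has_real_derivative
     (\<Sum>i<length bl. if fst (bl ! i) = j then dfactors (raise_order bl i) y else 0)) (at (y j))"
proof (induct bl)
  case Nil
  show ?case by simp
next
  case (Cons b bl)
  obtain j' a where b: "b = (j', a)" by (cases b)
  let ?D = "\<Sum>i<length bl. if fst (bl ! i) = j then dfactors (raise_order bl i) y else 0"
  have sum_eq: "(\<Sum>i<length (b # bl). if fst ((b # bl) ! i) = j then dfactors (raise_order (b # bl) i) y else 0)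
      = (if j' = j then (deriv ^^ Suc a) \<psi> (y j) * dfactors bl y else 0) + (deriv ^^ a) \<psi> (y j') * ?D"
    unfolding length_Cons sum.lessThan_Suc_shift
    by (auto simp: b raise_order_Cons_0 raise_order_Cons_Suc sum_distrib_left intro!: sum.cong)
  have "((\<lambda>t. dfactors (b # bl) (y(j := t))) has_real_derivative
      (if j' = j then (deriv ^^ Suc a) \<psi> (y j) * dfactors bl y else 0) + (deriv ^^ a) \<psi> (y j') * ?D) (at (y j))"
  proof (cases "j' = j")
    case True
    have "(\<lambda>t. dfactors (b # bl) (y(j := t))) = (\<lambda>t. (deriv ^^ a) \<psi> t * dfactors bl (y(j := t)))"
      by (simp add: b True)
    then show ?thesis
      using True by (auto intro: DERIV_cong[OF DERIV_mult[OF has_real_derivative_\<psi> Cons]])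
  next
    case False
    have "(\<lambda>t. dfactors (b # bl) (y(j := t))) = (\<lambda>t. (deriv ^^ a) \<psi> (y j') * dfactors bl (y(j := t)))"
      by (simp add: b False)
    then show ?thesis
      using False by (auto intro: DERIV_cong[OF DERIV_cmult[OF Cons]])
  qed
  then show ?case unfolding sum_eq .
qed

definition chain_term :: "((nat \<Rightarrow> real) \<Rightarrow> real) \<Rightarrow> (nat \<times> nat) list \<Rightarrow> (nat \<Rightarrow> real) \<Rightarrow> real" where
  "chain_term H bl y = H (\<lambda>i. \<psi> (y i)) * dfactors bl y"

lemma smooth_chain_term: "smooth H \<Longrightarrow> smooth (chain_term H bl)"
  unfolding chain_term_def[abs_def] by (intro smooth_mult smooth_comp_\<psi> smooth_dfactors)

lemma dpart_chain_term:
  assumes "smooth H"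
  shows "dpart j (chain_term H bl) = (\<lambda>y. chain_term (dpart j H) ((j, 1) # bl) y
    + (\<Sum>i\<in>{i. i < length bl \<and> fst (bl ! i) = j}. chain_term H (raise_order bl i) y))"
proof
  fix y
  have H: "partial_differentiable j H (\<lambda>i. \<psi> (y i))" using assms smooth_partial_differentiable by blast
  have dfactors: "partial_differentiable j (dfactors bl) y"
    "dpart j (dfactors bl) y = (\<Sum>i<length bl. if fst (bl ! i) = j then dfactors (raise_order bl i) y else 0)"
    by (rule partial_derivativeI[OF has_partial_derivative_dfactors])+
  have "dpart j (chain_term H bl) y = dpart j H (\<lambda>i. \<psi> (y i)) * deriv \<psi> (y j) * dfactors bl y
      + H (\<lambda>i. \<psi> (y i)) * (\<Sum>i<length bl. if fst (bl ! i) = j then dfactors (raise_order bl i) y else 0)"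
    unfolding chain_term_def[abs_def]
    using dpart_mult(2)[OF dpart_comp_\<psi>(1)[OF H] dfactors(1)] dpart_comp_\<psi>(2)[OF H] dfactors(2)
    by simp
  also have "(\<Sum>i<length bl. if fst (bl ! i) = j then dfactors (raise_order bl i) y else 0)
      = (\<Sum>i\<in>{i. i < length bl \<and> fst (bl ! i) = j}. dfactors (raise_order bl i) y)"
    by (simp add: sum.inter_filter[symmetric] lessThan_def conj_commute)
  finally show "dpart j (chain_term H bl) y = chain_term (dpart j H) ((j, 1) # bl) y
    + (\<Sum>i\<in>{i. i < length bl \<and> fst (bl ! i) = j}. chain_term H (raise_order bl i) y)"
    by (simp add: chain_term_def[abs_def] sum_distrib_left algebra_simps)
qed

lemma dparts_Cons_chain_term:
  "smooth H \<Longrightarrow> dparts (j # js) (chain_term H bl) = (\<lambda>y. dparts js (chain_term (dpart j H) ((j, 1) # bl)) y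
    + (\<Sum>i\<in>{i. i < length bl \<and> fst (bl ! i) = j}. dparts js (chain_term H (raise_order bl i)) y))"
  by (simp add: dpart_chain_term dparts_add dparts_sum smooth_chain_term smooth_sum smooth_dpart)

lemma card_factor_indices: "card {i. i < length bl \<and> fst (bl ! i) = j} = count_list (map fst bl) j"
proof -
  have "{i. i < length bl \<and> fst (bl ! i) = j} = {i. i < length (map fst bl) \<and> j = map fst bl ! i}"
    by auto
  then show ?thesis by (simp add: count_list_eq_length_filter length_filter_conv_card)
qed

lemma sum_list_raise_order: "i < length bl \<Longrightarrow> sum_list (map snd (raise_order bl i)) = Suc (sum_list (map snd bl))"
proof (induct bl arbitrary: i)
  case (Cons b bl)
  then show ?case by (cases i) (auto simp: raise_order_Cons_0 raise_order_Cons_Suc)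
qed simp

lemma map_fst_raise_order: "map fst (raise_order bl i) = map fst bl"
  by (simp add: raise_order_def map_update)
    (metis length_map list_update_beyond list_update_id not_le nth_map)

lemma dparts_chain_term_bound:
  assumes "set js \<subseteq> {..<s}" "smooth H"
    and "\<And>ks x. set ks \<subseteq> {..<s} \<Longrightarrow> \<bar>dparts ks H x\<bar> \<le> M (count_list ks)"
  shows "\<bar>dparts js (chain_term H bl) y\<bar> \<le> c ^ (sum_list (map snd bl) + length js) *
    (\<Sum>m\<le>count_list js. M m *
       (\<Prod>k<s. real (r_Stirling (count_list js k) (m k) (count_list (map fst bl) k))))"
  using assms
proof (induction js arbitrary: H M bl y)
  case Nil
  have "\<bar>H (\<lambda>i. \<psi> (y i)) * dfactors bl y\<bar> \<le> M (\<lambda>_. 0) * c ^ sum_list (map snd bl)"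
    unfolding abs_mult using Nil.prems(3)[of "[]" "\<lambda>i. \<psi> (y i)"] dfactors_bound[of bl y]
    by (intro mult_mono) (auto simp: count_list_Nil_fun)
  then show ?case by (simp add: count_list_Nil_fun atMost_fun_zero chain_term_def algebra_simps)
next
  case (Cons j js)
  let ?\<nu> = "count_list js" and ?b = "count_list (map fst bl)" and ?e = "sum_list (map snd bl)"
  let ?I = "{i. i < length bl \<and> fst (bl ! i) = j}"
  let ?S1 = "\<Sum>m\<le>?\<nu>. M (m(j := Suc (m j))) *
    (\<Prod>k<s. real (r_Stirling (?\<nu> k) (m k) ((?b(j := Suc (?b j))) k)))"
  let ?S2 = "\<Sum>m\<le>?\<nu>. M m * (\<Prod>k<s. real (r_Stirling (?\<nu> k) (m k) (?b k)))"
  have j: "j < s" and js: "set js \<subseteq> {..<s}" using Cons.prems(1) by auto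
  have H': "smooth (dpart j H)" using Cons.prems(2) by (rule smooth_dpart)
  have "\<bar>dparts js (chain_term (dpart j H) ((j, 1) # bl)) y\<bar> \<le> c ^ (Suc ?e + length js) * ?S1"
  proof -
    have "\<bar>dparts ks (dpart j H) x\<bar> \<le> M ((count_list ks)(j := Suc (count_list ks j)))"
      if "set ks \<subseteq> {..<s}" for ks x
      using j that Cons.prems(3) by (intro dparts_dpart_count_list_bound[where M = M]) auto
    note IH = Cons.IH[where M = "\<lambda>m. M (m(j := Suc (m j)))" and bl = "(j, 1) # bl" and y = y,
        OF js H' this]
    have "sum_list (map snd ((j, 1) # bl)) = Suc ?e"
      and "count_list (map fst ((j, 1) # bl)) = ?b(j := Suc (?b j))"
      by (simp_all add: count_list_Cons_fun)
    with IH show ?thesis by (simp only:)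
  qed
  moreover have "\<bar>dparts js (chain_term H (raise_order bl i)) y\<bar> \<le> c ^ (Suc ?e + length js) * ?S2"
    if "i \<in> ?I" for i
    using Cons.IH[where bl = "raise_order bl i" and y = y, OF js Cons.prems(2,3)] that
    by (simp add: sum_list_raise_order map_fst_raise_order)
  ultimately have "\<bar>dparts (j # js) (chain_term H bl) y\<bar>
      \<le> c ^ (Suc ?e + length js) * ?S1 + (\<Sum>i\<in>?I. c ^ (Suc ?e + length js) * ?S2)"
    unfolding dparts_Cons_chain_term[OF Cons.prems(2)] by (intro order_trans[OF abs_triangle_ineq add_mono[OF _ order_trans[OF sum_abs sum_mono]]])
  also have "\<dots> = c ^ (?e + length (j # js)) * (real (?b j) * ?S2 + ?S1)"
    by (simp add: card_factor_indices algebra_simps)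
  also have "real (?b j) * ?S2 + ?S1 = (\<Sum>m\<le>count_list (j # js). M m *
       (\<Prod>k<s. real (r_Stirling (count_list (j # js) k) (m k) (?b k))))"
    unfolding count_list_Cons_fun
    by (rule sum_r_Stirling_fun_upd_Suc[OF j finite_support_count_list, symmetric])
  finally show ?case .
qed

lemma dparts_comp_\<psi>_bound:
  assumes "set js \<subseteq> {..<s}" "js \<noteq> []" "smooth H"
    and "\<And>ks x. set ks \<subseteq> {..<s} \<Longrightarrow> ks \<noteq> [] \<Longrightarrow> \<bar>dparts ks H x\<bar> \<le> M (count_list ks)"
  shows "\<bar>dparts js (\<lambda>y. H (\<lambda>i. \<psi> (y i))) y\<bar>
    \<le> c ^ length js * (\<Sum>m\<le>count_list js. M m * (\<Prod>k<s. real (Stirling (count_list js k) (m k))))"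
proof -
  obtain j js' where js: "js = j # js'" using assms(2) by (cases js) auto
  have j: "j < s" and js': "set js' \<subseteq> {..<s}" using assms(1) js by auto
  let ?\<nu> = "count_list js'" and ?z = "\<lambda>_. 0 :: nat"
  have "dpart j (\<lambda>y. H (\<lambda>i. \<psi> (y i))) = chain_term (dpart j H) [(j, 1)]"
    using dpart_comp_\<psi>(2) assms(3) smooth_partial_differentiable
    by (auto simp: chain_term_def fun_eq_iff)
  then have "\<bar>dparts js (\<lambda>y. H (\<lambda>i. \<psi> (y i))) y\<bar> = \<bar>dparts js' (chain_term (dpart j H) [(j, 1)]) y\<bar>"
    by (simp add: js)
  also have "\<dots> \<le> c ^ (1 + length js') * (\<Sum>m\<le>?\<nu>. M (m(j := Suc (m j))) *
      (\<Prod>k<s. real (r_Stirling (?\<nu> k) (m k) ((?z(j := Suc (?z j))) k))))"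
  proof -
    have H'_bound: "\<bar>dparts ks (dpart j H) x\<bar> \<le> M ((count_list ks)(j := Suc (count_list ks j)))"
      if "set ks \<subseteq> {..<s}" for ks x
      using j that by (intro dparts_dpart_count_list_bound[OF _ _ assms(4)]) auto
    have "\<bar>dparts js' (chain_term (dpart j H) [(j, 1)]) y\<bar> \<le> c ^ (sum_list (map snd [(j, 1)]) + length js') *
      (\<Sum>m\<le>?\<nu>. M (m(j := Suc (m j))) *
        (\<Prod>k<s. real (r_Stirling (?\<nu> k) (m k) (count_list (map fst [(j, 1 :: nat)]) k))))"
      using js' smooth_dpart[OF assms(3)] H'_bound
      by (rule dparts_chain_term_bound[where M = "\<lambda>m. M (m(j := Suc (m j)))"])
    moreover have "sum_list (map snd [(j, 1 :: nat)]) = 1"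
      and "count_list (map fst [(j, 1 :: nat)]) = ?z(j := Suc (?z j))"
      by (simp_all add: count_list_Cons_fun count_list_Nil_fun)
    ultimately show ?thesis by (simp only:)
  qed
  also have "\<dots> = c ^ length js *
      (\<Sum>m\<le>count_list js. M m * (\<Prod>k<s. real (r_Stirling (count_list js k) (m k) 0)))"
    using sum_r_Stirling_fun_upd_Suc[OF j finite_support_count_list, of M js' ?z]
    by (simp add: js count_list_Cons_fun)
  finally show ?thesis by (simp add: r_Stirling_0)
qed

end

lemma deriv_funpow_sin_scaled:
  "(deriv ^^ k) (\<lambda>t. sin (2 * pi * t)) = (\<lambda>t. (2 * pi) ^ k * sin (2 * pi * t + real k * pi / 2))"
proof (induct k)
  case (Suc k)
  have deriv: "((\<lambda>t. (2 * pi) ^ k * sin (2 * pi * t + real k * pi / 2)) has_real_derivative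
      (2 * pi) ^ Suc k * sin (2 * pi * t + real (Suc k) * pi / 2)) (at t)" for t
  proof -
    have "sin (2 * pi * t + real (Suc k) * pi / 2) = cos (2 * pi * t + real k * pi / 2)"
      by (simp add: algebra_simps add_divide_distrib sin_add)
    then show ?thesis by (auto intro!: derivative_eq_intros)
  qed
  show ?case
    by (rule ext) (simp only: funpow.simps(2) o_apply Suc DERIV_imp_deriv[OF deriv])
qed simp

lemma feature_map_sin: "feature_map (\<lambda>t. sin (2 * pi * t)) (2 * pi)"
proof
  have "((\<lambda>t. (2 * pi) ^ k * sin (2 * pi * t + real k * pi / 2)) has_real_derivative
      (2 * pi) ^ k * (cos (2 * pi * x + real k * pi / 2) * (2 * pi))) (at x)" for k x
    by (auto intro!: derivative_eq_intros)
  then show "\<forall>k x. (deriv ^^ k) (\<lambda>t. sin (2 * pi * t)) differentiable (at x)"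
    unfolding deriv_funpow_sin_scaled real_differentiable_def by blast
  show "\<bar>(deriv ^^ k) (\<lambda>t. sin (2 * pi * t)) x\<bar> \<le> (2 * pi) ^ k" for k x
    unfolding deriv_funpow_sin_scaled by (simp add: abs_mult)
qed

section \<open>Multi-indices\<close>

text \<open>\<^const>\<open>mpartial\<close> differentiates in coordinate \<open>s - 1\<close> first, so the coordinate list is reversed.\<close>
definition multiindex_list :: "nat \<Rightarrow> (nat \<Rightarrow> nat) \<Rightarrow> nat list" where
  "multiindex_list s \<nu> = rev (concat (map (\<lambda>j. replicate (\<nu> j) j) [0..<s]))"

lemma mpartial_eq_dparts: "mpartial s \<nu> f = dparts (multiindex_list s \<nu>) f"
proof -
  have "foldr dpart (concat (map (\<lambda>j. replicate (\<nu> j) j) xs)) f = foldr (\<lambda>j g. (dpart j ^^ \<nu> j) g) xs f"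
    for xs by (induct xs) (auto simp: foldr_replicate)
  then show ?thesis
    by (simp add: mpartial_def multiindex_list_def dparts_def foldr_conv_fold)
qed

lemma set_multiindex_list: "set (multiindex_list s \<nu>) \<subseteq> {..<s}"
  by (auto simp: multiindex_list_def)

lemma count_list_multiindex_list:
  assumes "\<And>j. j \<ge> s \<Longrightarrow> \<nu> j = 0"
  shows "count_list (multiindex_list s \<nu>) = \<nu>"
proof
  fix k :: nat
  have "count_list (replicate n j) k = (if j = k then n else 0)" for n j
    by (induct n) auto
  then have "count_list (concat (map (\<lambda>j. replicate (\<nu> j) j) [0..<s])) k = (if k < s then \<nu> k else 0)"
    by (induct s) auto
  then show "count_list (multiindex_list s \<nu>) k = \<nu> k"
    using assms[of k] by (simp add: multiindex_list_def)
qed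

lemma atMost_fun_eq:
  fixes \<nu> :: "nat \<Rightarrow> nat"
  assumes "\<And>j. j \<ge> s \<Longrightarrow> \<nu> j = 0"
  shows "{..\<nu>} = {m. (\<forall>j<s. m j \<le> \<nu> j) \<and> (\<forall>j\<ge>s. m j = 0)}"
proof (intro set_eqI iffI)
  fix m assume "m \<in> {..\<nu>}"
  then have le: "m j \<le> \<nu> j" for j by (simp add: le_fun_def)
  have "m j = 0" if "s \<le> j" for j
    using le[of j] assms[OF that] by simp
  with le show "m \<in> {m. (\<forall>j<s. m j \<le> \<nu> j) \<and> (\<forall>j\<ge>s. m j = 0)}" by blast
next
  fix m assume m: "m \<in> {m. (\<forall>j<s. m j \<le> \<nu> j) \<and> (\<forall>j\<ge>s. m j = 0)}"
  show "m \<in> {..\<nu>}" unfolding atMost_iff le_fun_def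
  proof
    fix j show "m j \<le> \<nu> j" using m by (cases "j < s") auto
  qed
qed

lemma prod_list_eq_prod_count_list:
  fixes \<beta> :: "nat \<Rightarrow> 'a :: comm_monoid_mult"
  shows "set ks \<subseteq> {..<s} \<Longrightarrow> (\<Prod>i\<leftarrow>ks. \<beta> i) = (\<Prod>k<s. \<beta> k ^ count_list ks k)"
proof (induct ks)
  case (Cons j ks)
  then have "(\<Prod>k<s. \<beta> k ^ count_list (j # ks) k) = (\<Prod>k<s. \<beta> k ^ count_list ks k * (if k = j then \<beta> k else 1))"
    by (intro prod.cong) (auto simp: mult.commute)
  also have "\<dots> = \<beta> j * (\<Prod>k<s. \<beta> k ^ count_list ks k)"
    using Cons by (simp add: prod.distrib prod.delta' mult.commute)
  finally show ?case using Cons by simp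
qed simp

context network_bounds
begin

lemma dparts_net_bound_count_list:
  assumes "1 \<le> l" "l \<le> L" "p < d (Suc l)" "set ks \<subseteq> {..<s}" "ks \<noteq> []"
  shows "\<bar>dparts ks (\<lambda>x. net d W v \<sigma> x l p) y\<bar>
    \<le> R l * (\<Prod>k<s. \<beta> k ^ count_list ks k) * Gamma A R l (\<Sum>k<s. count_list ks k)"
proof -
  have "(\<Prod>i\<leftarrow>ks. \<beta> i) * (R l * Gamma A R l (length ks))
      = R l * (\<Prod>k<s. \<beta> k ^ count_list ks k) * Gamma A R l (\<Sum>k<s. count_list ks k)"
    unfolding prod_list_eq_prod_count_list[OF assms(4)] sum_count_set[OF assms(4) finite_lessThan]
    by (simp only: ac_simps)
  with dparts_net_bound[OF assms, of y] show ?thesis by (simp only:)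
qed

lemma mpartial_netNP_bound:
  assumes "1 \<le> l" "l \<le> L" "p < d (Suc l)" "\<And>j. j \<ge> s \<Longrightarrow> \<nu> j = 0" "\<nu> \<noteq> (\<lambda>_. 0)"
  shows "\<bar>mpartial s \<nu> (\<lambda>y. netNP d W v \<sigma> l y p) y\<bar>
    \<le> R l * (\<Prod>j<s. \<beta> j ^ \<nu> j) * Gamma A R l (\<Sum>j<s. \<nu> j)"
proof -
  let ?js = "multiindex_list s \<nu>"
  have \<nu>: "count_list ?js = \<nu>" using count_list_multiindex_list[OF assms(4)] .
  have "?js \<noteq> []" using \<nu> assms(5) by (metis count_list_Nil_fun)
  have "\<bar>mpartial s \<nu> (\<lambda>y. netNP d W v \<sigma> l y p) y\<bar> = \<bar>dparts ?js (\<lambda>x. net d W v \<sigma> x l p) y\<bar>"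
    by (simp add: mpartial_eq_dparts netNP_def)
  also have "\<dots> \<le> R l * (\<Prod>k<s. \<beta> k ^ count_list ?js k) * Gamma A R l (\<Sum>k<s. count_list ?js k)"
    by (rule dparts_net_bound_count_list[OF assms(1-3) set_multiindex_list \<open>?js \<noteq> []\<close>])
  finally show ?thesis unfolding \<nu> .
qed

lemma mpartial_netP_bound:
  assumes "1 \<le> l" "l \<le> L" "p < d (Suc l)" "\<And>j. j \<ge> s \<Longrightarrow> \<nu> j = 0" "\<nu> \<noteq> (\<lambda>_. 0)"
  shows "\<bar>mpartial s \<nu> (\<lambda>y. netP d W v \<sigma> l y p) y\<bar>
    \<le> R l * (2 * pi) ^ (\<Sum>j<s. \<nu> j) * (\<Sum>m\<le>\<nu>. (\<Prod>j<s. \<beta> j ^ m j) * Gamma A R l (\<Sum>j<s. m j)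
        * (\<Prod>j<s. real (Stirling (\<nu> j) (m j))))"
proof -
  let ?js = "multiindex_list s \<nu>"
  let ?M = "\<lambda>m. R l * (\<Prod>k<s. \<beta> k ^ m k) * Gamma A R l (\<Sum>k<s. m k)"
  have \<nu>: "count_list ?js = \<nu>" using count_list_multiindex_list[OF assms(4)] .
  have "?js \<noteq> []" using \<nu> assms(5) by (metis count_list_Nil_fun)
  have len: "length ?js = (\<Sum>j<s. \<nu> j)"
    using sum_count_set[OF set_multiindex_list finite_lessThan, of s \<nu>] unfolding \<nu> by simp
  have "\<bar>mpartial s \<nu> (\<lambda>y. netP d W v \<sigma> l y p) y\<bar>
      = \<bar>dparts ?js (\<lambda>y. net d W v \<sigma> (\<lambda>i. sin (2 * pi * y i)) l p) y\<bar>"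
    by (simp add: mpartial_eq_dparts netP_def)
  also have "\<dots> \<le> (2 * pi) ^ length ?js *
      (\<Sum>m\<le>count_list ?js. ?M m * (\<Prod>k<s. real (Stirling (count_list ?js k) (m k))))"
    by (rule feature_map.dparts_comp_\<psi>_bound[where M = ?M, OF feature_map_sin set_multiindex_list
          \<open>?js \<noteq> []\<close> smooth_net[OF \<sigma>_smooth] dparts_net_bound_count_list[OF assms(1-3)]])
  also have "\<dots> = R l * (2 * pi) ^ (\<Sum>j<s. \<nu> j) * (\<Sum>m\<le>\<nu>. (\<Prod>j<s. \<beta> j ^ m j)
      * Gamma A R l (\<Sum>j<s. m j) * (\<Prod>j<s. real (Stirling (\<nu> j) (m j))))"
    unfolding \<nu> len by (simp add: sum_distrib_left ac_simps)
  finally show ?thesis .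
qed

end

theorem theorem2p1:
  fixes s L :: nat and d :: "nat \<Rightarrow> nat"
    and W :: "nat \<Rightarrow> nat \<Rightarrow> nat \<Rightarrow> real" and v :: "nat \<Rightarrow> nat \<Rightarrow> real"
    and \<sigma> :: "real \<Rightarrow> real"
    and \<beta> R A :: "nat \<Rightarrow> real"
  assumes s: "s \<ge> 1" and L: "L \<ge> 1"
    and d0: "d 0 = s" and dpos: "\<forall>i\<le>L+1. d i \<ge> 1"
    and smooth: "\<forall>n x. (deriv ^^ n) \<sigma> differentiable (at x)"
    and \<beta>pos: "\<forall>j. \<beta> j > 0" and Rpos: "\<forall>l. R l > 0" and Apos: "\<forall>n. A n > 0"
    and W0: "\<forall>j<s. \<forall>p<d 1. \<bar>W 0 p j\<bar> \<le> \<beta> j"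
    and Wl: "\<forall>l. 1 \<le> l \<and> l \<le> L \<longrightarrow> (\<forall>p<d (l+1). (\<Sum>q<d l. \<bar>W l p q\<bar>) \<le> R l)"
    and \<sigma>bd: "\<forall>n\<ge>1. \<forall>x. \<bar>(deriv ^^ n) \<sigma> x\<bar> \<le> A n"
  shows "\<forall>l p nu y. 1 \<le> l \<and> l \<le> L \<and> p < d (l+1) \<and> (\<forall>j\<ge>s. nu j = 0) \<and> nu \<noteq> (\<lambda>_. 0) \<longrightarrow>
     \<bar>mpartial s nu (\<lambda>y. netNP d W v \<sigma> l y p) y\<bar>
        \<le> R l * (\<Prod>j<s. \<beta> j ^ nu j) * Gamma A R l (\<Sum>j<s. nu j)
   \<and> \<bar>mpartial s nu (\<lambda>y. netP d W v \<sigma> l y p) y\<bar>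
        \<le> R l * (2 * pi) ^ (\<Sum>j<s. nu j) *
           (\<Sum>m\<in>{m. (\<forall>j<s. m j \<le> nu j) \<and> (\<forall>j\<ge>s. m j = 0)}.
              (\<Prod>j<s. \<beta> j ^ m j) * Gamma A R l (\<Sum>j<s. m j)
              * (\<Prod>j<s. real (Stirling (nu j) (m j))))"
proof -
  interpret network_bounds s L d W v \<sigma> \<beta> R A
    using assms by unfold_locales (auto simp: less_imp_le)
  show ?thesis
    using mpartial_netNP_bound mpartial_netP_bound by (simp add: atMost_fun_eq[symmetric])
qed

end
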